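(* Let $P,Q$ be coprime non-zero integers with $\Delta:=P^2-4Q>0$, let $(U_n)_{n\geq0}$ be the Lucas sequence $U(P,Q)$, and let $\alpha$ be the root of $X^2-PX+Q=0$ of largest absolute value. Then for every positive integer $n$, \[|\alpha|^{\frac{n^2}{4}-\frac{n}{2}-1}\leq \mathrm{lcm}(U_1,U_2,\dots,U_n)\leq |\alpha|^{\frac{n^2}{3}+\frac{7n}{3}-\frac{8}{3}}.\]
   Context: For non-zero integers $P,Q$, the Lucas sequence $U(P,Q)=(U_n)_{n\geq0}$ is defined by $U_0=0$, $U_1=1$, $U_{n+2}=PU_{n+1}-QU_n$ for $n\geq0$. When $\Delta=P^2-4Q>0$, the roots $\alpha,\beta$ of $X^2-PX+Q=0$ are real and labelled so that $|\alpha|>|\beta|$. $\mathrm{lcm}$ denotes the least common positive multiple (of the integers $U_1,\dots,U_n$, which are non-zero under these hypotheses). *)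

theory Defs
  imports Complex_Main
begin

fun lucasU :: "int \<Rightarrow> int \<Rightarrow> nat \<Rightarrow> int" where
  "lucasU P Q 0 = 0"
| "lucasU P Q (Suc 0) = 1"
| "lucasU P Q (Suc (Suc n)) = P * lucasU P Q (Suc n) - Q * lucasU P Q n"

end

theory Submission
  imports Defs "HOL-Computational_Algebra.Primes"
begin

text \<open>
  With \<open>\<beta> = P - \<alpha>\<close> one has \<open>U n = (\<alpha>^n - \<beta>^n) / (\<alpha> - \<beta>)\<close> and \<open>\<bar>\<beta>\<bar> + 1 \<le> \<bar>\<alpha>\<bar>\<close>, hence
  \<open>\<bar>U n\<bar> \<le> \<bar>\<alpha>\<bar>^(n+1)\<close> and \<open>\<bar>\<alpha>\<bar>^(s-1) \<bar>U j\<bar> \<le> \<bar>U (s+j)\<bar>\<close>.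

  Lower bound: for coprime \<open>P, Q\<close> the sequence is a strong divisibility sequence, so the
  indices \<open>i \<ge> 1\<close> with \<open>d dvd U i\<close> are the multiples of a rank of apparition of \<open>d\<close>.
  Comparing \<open>p\<close>-adic valuations one prime power at a time, \<open>U (s+1) \<cdots> U (s+k)\<close> divides
  \<open>lcm (U 1, \<dots>, U (s+k)) \<cdot> U 1 \<cdots> U k\<close>; for \<open>k = n div 2\<close>, \<open>s = n - k\<close> this gives
  \<open>lcm \<ge> \<bar>\<alpha>\<bar>^((s-1) k)\<close>.

  Upper bound: adjoining \<open>U k\<close> multiplies the lcm by \<open>\<bar>U k\<bar> / gcd (U k, lcm (U 1, \<dots>, U (k-1)))\<close>.
  That gcd is a multiple of \<open>U (k/2)\<close> or \<open>U (k/3)\<close>, and of \<open>lcm (U (k/2), U (k/3))\<close> when \<open>6 dvd k\<close>,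
  while the cofactors \<open>\<alpha>^m + \<beta>^m\<close> and \<open>\<alpha>^(2m) \<plusminus> \<alpha>^m \<beta>^m + \<beta>^(2m)\<close> are at most \<open>\<bar>\<alpha>\<bar>^(m+1)\<close> and
  \<open>\<bar>\<alpha>\<bar>^(2m+1)\<close>. Summing the resulting exponents over \<open>k \<le> n\<close> gives \<open>n^2/3 + 7n/3 - 8/3\<close>.
\<close>

lemma lucasU_add:
  "lucasU P Q (m + n + 1) = lucasU P Q (m + 1) * lucasU P Q (n + 1) - Q * lucasU P Q m * lucasU P Q n"
proof (induction P Q n rule: lucasU.induct)
  case (3 P Q n)
  have "lucasU P Q (m + Suc (Suc n) + 1)
      = P * lucasU P Q (m + Suc n + 1) - Q * lucasU P Q (m + n + 1)"
    by (simp add: add.commute)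
  also have "\<dots> = lucasU P Q (m + 1) * lucasU P Q (Suc (Suc n) + 1)
      - Q * lucasU P Q m * lucasU P Q (Suc (Suc n))"
    unfolding "3.IH" by (simp add: algebra_simps)
  finally show ?case .
qed (simp_all add: algebra_simps)

lemma dvd_lucasU_Suc_minus_power: "Q dvd lucasU P Q (Suc n) - P ^ n"
proof (induction n)
  case (Suc n)
  have "lucasU P Q (Suc (Suc n)) - P ^ Suc n = P * (lucasU P Q (Suc n) - P ^ n) - Q * lucasU P Q n"
    by (simp add: algebra_simps)
  then show ?case
    by (simp only:) (rule dvd_diff[OF dvd_mult[OF Suc.IH]], simp)
qed simp

lemma coprime_lucasU_Suc_Q:
  assumes "coprime P Q"
  shows "coprime (lucasU P Q (Suc n)) Q"
proof -
  obtain c where "lucasU P Q (Suc n) - P ^ n = Q * c"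
    using dvd_lucasU_Suc_minus_power by (rule dvdE)
  then have "lucasU P Q (Suc n) = c * Q + P ^ n" by (simp add: algebra_simps)
  moreover have "coprime (P ^ n) Q" using assms by simp
  ultimately show ?thesis
    by (simp add: coprime_iff_gcd_eq_1 gcd_add_mult gcd.commute)
qed

lemma coprime_lucasU_Suc:
  assumes "coprime P Q"
  shows "coprime (lucasU P Q n) (lucasU P Q (Suc n))"
proof (induction n)
  case (Suc n)
  have "coprime (lucasU P Q (Suc n)) (Q * lucasU P Q n)"
    using Suc.IH coprime_lucasU_Suc_Q[OF assms, of n] by (simp add: coprime_commute)
  then have "coprime (lucasU P Q (Suc n)) (- (Q * lucasU P Q n))" by simp
  moreover have "lucasU P Q (Suc (Suc n)) = P * lucasU P Q (Suc n) + - (Q * lucasU P Q n)" by simp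
  ultimately show ?case
    unfolding coprime_iff_gcd_eq_1 by (simp only: gcd_add_mult)
qed simp

lemma lucasU_dvd_lucasU:
  assumes "m dvd n"
  shows "lucasU P Q m dvd lucasU P Q n"
proof -
  have "lucasU P Q m dvd lucasU P Q (k * m)" for k
  proof (induction k)
    case (Suc k)
    show ?case
    proof (cases m)
      case (Suc m')
      have "lucasU P Q (Suc k * m) = lucasU P Q (k * m + m' + 1)"
        using Suc by (simp add: algebra_simps)
      also have "\<dots> = lucasU P Q (k * m + 1) * lucasU P Q (m' + 1) - Q * lucasU P Q (k * m) * lucasU P Q m'"
        by (rule lucasU_add)
      finally show ?thesis
        using Suc.IH Suc by simp
    qed simp
  qed simp
  then show ?thesis using assms by (metis dvdE mult.commute)
qed

lemma dvd_lucasU_gcd: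
  assumes "coprime P Q"
  shows "d dvd lucasU P Q m \<Longrightarrow> d dvd lucasU P Q n \<Longrightarrow> d dvd lucasU P Q (gcd m n)"
proof (induction m n rule: gcd_nat_induct)
  case (step m n)
  define q where "q = m div n"
  have d_dvd_qn: "d dvd lucasU P Q (q * n)"
    using step.prems(2) lucasU_dvd_lucasU[where m = n and n = "q * n"] by (auto intro: dvd_trans)
  have "d dvd lucasU P Q (m mod n)"
  proof (cases "m mod n")
    case (Suc r)
    have "m = q * n + r + 1" using Suc div_mult_mod_eq[of m n] by (simp add: q_def)
    then have "lucasU P Q (q * n + 1) * lucasU P Q (r + 1) = lucasU P Q m + Q * lucasU P Q (q * n) * lucasU P Q r"
      using lucasU_add[of P Q "q * n" r] by simp
    then have "d dvd lucasU P Q (q * n + 1) * lucasU P Q (r + 1)"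
      using step.prems(1) d_dvd_qn by simp
    moreover have "coprime d (lucasU P Q (q * n + 1))"
      using coprime_divisors[OF d_dvd_qn dvd_refl coprime_lucasU_Suc[OF assms]] by simp
    ultimately have "d dvd lucasU P Q (r + 1)"
      by (metis coprime_dvd_mult_right_iff)
    then show ?thesis using Suc by simp
  qed simp
  then show ?case using step by (simp add: gcd_red_nat[of m n])
qed simp

lemma lucasU_rank_of_apparition:
  assumes "coprime P Q" and "r \<ge> 1" and "d dvd lucasU P Q r"
  obtains \<rho> where "\<rho> \<ge> 1" and "\<And>i. i \<ge> 1 \<Longrightarrow> d dvd lucasU P Q i \<longleftrightarrow> \<rho> dvd i"
proof
  define \<rho> where "\<rho> = (LEAST r. r \<ge> 1 \<and> d dvd lucasU P Q r)"
  have \<rho>: "\<rho> \<ge> 1" "d dvd lucasU P Q \<rho>"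
    using LeastI[of "\<lambda>r. r \<ge> 1 \<and> d dvd lucasU P Q r"] assms unfolding \<rho>_def by auto
  show "\<rho> \<ge> 1" by (fact \<rho>(1))
  fix i :: nat assume "i \<ge> 1"
  show "d dvd lucasU P Q i \<longleftrightarrow> \<rho> dvd i"
  proof
    assume "d dvd lucasU P Q i"
    then have "d dvd lucasU P Q (gcd i \<rho>)"
      using dvd_lucasU_gcd[OF assms(1)] \<rho> by blast
    moreover have "gcd i \<rho> \<ge> 1" using \<open>i \<ge> 1\<close> by (simp add: Suc_le_eq)
    ultimately have "\<rho> \<le> gcd i \<rho>" unfolding \<rho>_def by (intro Least_le) simp
    then show "\<rho> dvd i"
      using \<rho>(1) gcd_le2_nat[of \<rho> i] by (metis antisym gcd_dvd1 not_one_le_zero)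
  next
    assume "\<rho> dvd i"
    then show "d dvd lucasU P Q i"
      using \<rho>(2) lucasU_dvd_lucasU dvd_trans by blast
  qed
qed

lemma lucasU_dvd_gcd_Lcm:
  assumes "1 \<le> d" and "d < k" and "d dvd k"
  shows "lucasU P Q d dvd gcd (lucasU P Q k) (Lcm (lucasU P Q ` {1..k-1}))"
  using assms by (auto intro: lucasU_dvd_lucasU dvd_Lcm)

lemma card_multiples_atLeastAtMost:
  fixes r N :: nat
  assumes "r > 0"
  shows "card {i \<in> {1..N}. r dvd i} = N div r"
proof -
  have "{i \<in> {1..N}. r dvd i} = (\<lambda>m. r * m) ` {1..N div r}"
  proof (intro equalityI subsetI)
    fix i assume "i \<in> {i \<in> {1..N}. r dvd i}"
    then obtain m where i: "i = r * m" and "1 \<le> i" "i \<le> N" by auto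
    then have "1 \<le> m" by (cases m) auto
    moreover have "m \<le> N div r"
      using i \<open>i \<le> N\<close> assms by (metis div_le_mono nonzero_mult_div_cancel_left not_gr0)
    ultimately show "i \<in> (\<lambda>m. r * m) ` {1..N div r}" using i by auto
  next
    fix i assume "i \<in> (\<lambda>m. r * m) ` {1..N div r}"
    then obtain m where "1 \<le> m" "m \<le> N div r" "i = r * m" by auto
    moreover from this have "r * m \<le> N"
      by (metis less_mult_imp_div_less mult.commute not_le)
    ultimately show "i \<in> {i \<in> {1..N}. r dvd i}" using assms by auto
  qed
  moreover have "inj_on (\<lambda>m. r * m) {1..N div r}" using assms by (auto simp: inj_on_def)
  ultimately show ?thesis by (simp add: card_image)
qed

lemma card_shifted_multiples_le:
  fixes r s k :: nat
  assumes "r > 0"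
  shows "card {i \<in> {1..k}. r dvd s + i} \<le> card {i \<in> {1..k}. r dvd i} + 1"
proof -
  have "(\<lambda>i. s + i) ` {i \<in> {1..k}. r dvd s + i} = {j \<in> {s+1..s+k}. r dvd j}"
  proof (intro equalityI subsetI)
    fix j assume "j \<in> {j \<in> {s+1..s+k}. r dvd j}"
    then show "j \<in> (\<lambda>i. s + i) ` {i \<in> {1..k}. r dvd s + i}"
      by (intro image_eqI[where x = "j - s"]) auto
  qed auto
  then have "card {i \<in> {1..k}. r dvd s + i} = card {j \<in> {s+1..s+k}. r dvd j}"
    by (metis (no_types, lifting) card_image inj_on_add)
  also have "\<dots> = (s + k) div r - s div r"
  proof -
    have "{j \<in> {1..s+k}. r dvd j} = {j \<in> {1..s}. r dvd j} \<union> {j \<in> {s+1..s+k}. r dvd j}" by auto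
    then have "card {j \<in> {1..s+k}. r dvd j} = card {j \<in> {1..s}. r dvd j} + card {j \<in> {s+1..s+k}. r dvd j}"
      by (simp add: card_Un_disjoint disjoint_iff)
    then show ?thesis using card_multiples_atLeastAtMost[OF assms] by simp
  qed
  also have "\<dots> \<le> k div r + 1"
  proof -
    have "s mod r < r" "k mod r < r" using assms by simp_all
    then have "s mod r + k mod r < 2 * r" by linarith
    then have "(s mod r + k mod r) div r < 2" by (rule less_mult_imp_div_less)
    then show ?thesis using div_add1_eq[of s k r] by simp
  qed
  finally show ?thesis using card_multiples_atLeastAtMost[OF assms] by simp
qed

lemma sum_card_level_sets:
  fixes f :: "'a \<Rightarrow> nat"
  assumes "finite I"
  shows "(\<Sum>t\<in>{1..T}. card {i \<in> I. t \<le> f i}) = (\<Sum>i\<in>I. min (f i) T)"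
proof -
  have "(\<Sum>t\<in>{1..T}. card {i \<in> I. t \<le> f i}) = (\<Sum>t\<in>{1..T}. \<Sum>i\<in>I. if t \<le> f i then 1 else 0)"
    using assms by (simp add: sum.If_cases Int_def)
  also have "\<dots> = (\<Sum>i\<in>I. \<Sum>t\<in>{1..T}. if t \<le> f i then 1 else 0)"
    by (rule sum.swap)
  also have "\<dots> = (\<Sum>i\<in>I. card {t \<in> {1..T}. t \<le> f i})"
    by (simp add: sum.If_cases Int_def)
  also have "\<dots> = (\<Sum>i\<in>I. min (f i) T)"
  proof (intro sum.cong refl)
    fix i show "card {t \<in> {1..T}. t \<le> f i} = min (f i) T"
      by (subgoal_tac "{t \<in> {1..T}. t \<le> f i} = {1..min (f i) T}") auto
  qed
  finally show ?thesis .
qed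

text \<open>
  For each prime power \<open>p^t\<close>, the shifted block has at most one more multiple of \<open>p^t\<close> than the
  initial block, and if it has any, \<open>p^t\<close> divides \<open>L\<close>; summing over \<open>t\<close> compares valuations.
\<close>

lemma multiplicity_prod_shift_le:
  fixes u :: "nat \<Rightarrow> int" and p L :: int
  assumes "prime p" and nonzero: "\<And>i. i \<in> {1..s+k} \<Longrightarrow> u i \<noteq> 0" and "L \<noteq> 0"
    and count: "\<And>t. card {i \<in> {1..k}. p ^ t dvd u (s + i)}
      \<le> card {i \<in> {1..k}. p ^ t dvd u i} + (if p ^ t dvd L then 1 else 0)"
  shows "multiplicity p (\<Prod>i\<in>{1..k}. u (s + i)) \<le> multiplicity p (\<Prod>i\<in>{1..k}. u i) + multiplicity p L"
proof -
  define v where "v x = multiplicity p x" for x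
  define T where "T = v (\<Prod>i\<in>{1..k}. u (s + i))"
  have level_iff: "t \<le> v x \<longleftrightarrow> p ^ t dvd x" if "x \<noteq> 0" for t x
    unfolding v_def using that \<open>prime p\<close>
    by (intro power_dvd_iff_le_multiplicity [symmetric]) (auto dest: not_prime_unit)
  have v_prod: "v (\<Prod>i\<in>{1..k}. u (f i)) = (\<Sum>i\<in>{1..k}. v (u (f i)))"
    if "\<And>i. i \<in> {1..k} \<Longrightarrow> f i \<in> {1..s+k}" for f
    unfolding v_def using \<open>prime p\<close> that nonzero
    by (intro prime_elem_multiplicity_prod_distrib) auto
  have "v (u (s + i)) \<le> T" if "i \<in> {1..k}" for i
    unfolding T_def v_def using that nonzero
    by (intro dvd_imp_multiplicity_le dvd_prodI) auto
  then have "T = (\<Sum>i\<in>{1..k}. min (v (u (s + i))) T)"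
    unfolding T_def using v_prod[of "\<lambda>i. s + i"] by (simp add: min_absorb1)
  also have "\<dots> = (\<Sum>t\<in>{1..T}. card {i \<in> {1..k}. t \<le> v (u (s + i))})"
    by (rule sum_card_level_sets [symmetric]) simp
  also have "\<dots> \<le> (\<Sum>t\<in>{1..T}. card {i \<in> {1..k}. t \<le> v (u i)} + (if t \<le> v L then 1 else 0))"
  proof (intro sum_mono)
    fix t
    have "{i \<in> {1..k}. t \<le> v (u (s + i))} = {i \<in> {1..k}. p ^ t dvd u (s + i)}"
      "{i \<in> {1..k}. t \<le> v (u i)} = {i \<in> {1..k}. p ^ t dvd u i}"
      using level_iff nonzero by auto
    then show "card {i \<in> {1..k}. t \<le> v (u (s + i))}
        \<le> card {i \<in> {1..k}. t \<le> v (u i)} + (if t \<le> v L then 1 else 0)"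
      using count[of t] level_iff[OF \<open>L \<noteq> 0\<close>] by simp
  qed
  also have "\<dots> = (\<Sum>i\<in>{1..k}. min (v (u i)) T) + min (v L) T"
  proof -
    have "{t \<in> {1..T}. t \<le> v L} = {1..min (v L) T}" by auto
    then have "(\<Sum>t\<in>{1..T}. if t \<le> v L then 1 else 0) = min (v L) T"
      by (simp add: sum.If_cases Int_def)
    then show ?thesis
      using sum_card_level_sets[of "{1..k}" "\<lambda>i. v (u i)" T] by (simp add: sum.distrib)
  qed
  also have "\<dots> \<le> v (\<Prod>i\<in>{1..k}. u i) + v L"
    using v_prod[of "\<lambda>i. i"] by (intro add_mono) (auto intro: sum_mono)
  finally show ?thesis unfolding T_def v_def .
qed

lemma prod_shift_dvd_Lcm_mult_prod:
  fixes u :: "nat \<Rightarrow> int" and s k :: nat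
  assumes nonzero: "\<And>i. i \<in> {1..s+k} \<Longrightarrow> u i \<noteq> 0"
    and count: "\<And>d. card {i \<in> {1..k}. d dvd u (s + i)} \<le> card {i \<in> {1..k}. d dvd u i} + 1"
  shows "(\<Prod>i\<in>{1..k}. u (s + i)) dvd Lcm (u ` {1..s+k}) * (\<Prod>i\<in>{1..k}. u i)"
proof -
  define L where "L = Lcm (u ` {1..s+k})"
  have "L \<noteq> 0" "(\<Prod>i\<in>{1..k}. u i) \<noteq> 0" "(\<Prod>i\<in>{1..k}. u (s + i)) \<noteq> 0"
    using nonzero by (auto simp: L_def Lcm_0_iff)
  have count_L: "card {i \<in> {1..k}. d dvd u (s + i)}
      \<le> card {i \<in> {1..k}. d dvd u i} + (if d dvd L then 1 else 0)" for d
  proof (cases "\<exists>i \<in> {1..k}. d dvd u (s + i)")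
    case True
    then have "d dvd L" unfolding L_def by (auto intro: dvd_trans[OF _ dvd_Lcm])
    then show ?thesis using count by simp
  next
    case False
    then have "{i \<in> {1..k}. d dvd u (s + i)} = {}" by auto
    then show ?thesis by (simp only: card.empty zero_le)
  qed
  have "multiplicity p (\<Prod>i\<in>{1..k}. u (s + i)) \<le> multiplicity p (L * (\<Prod>i\<in>{1..k}. u i))"
    if "prime p" for p
    using multiplicity_prod_shift_le[OF that nonzero \<open>L \<noteq> 0\<close> count_L] \<open>prime p\<close>
      prime_elem_multiplicity_mult_distrib[OF prime_imp_prime_elem \<open>L \<noteq> 0\<close> \<open>(\<Prod>i\<in>{1..k}. u i) \<noteq> 0\<close>]
    by simp
  then show ?thesis
    unfolding L_def [symmetric] using \<open>(\<Prod>i\<in>{1..k}. u (s + i)) \<noteq> 0\<close>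
    by (intro multiplicity_le_imp_dvd) auto
qed

lemma card_dvd_lucasU_shift_le:
  assumes "coprime P Q"
  shows "card {i \<in> {1..k}. d dvd lucasU P Q (s + i)} \<le> card {i \<in> {1..k}. d dvd lucasU P Q i} + 1"
proof (cases "\<exists>r \<ge> 1. d dvd lucasU P Q r")
  case True
  then obtain \<rho> where "\<rho> \<ge> 1" and rank: "\<And>i. i \<ge> 1 \<Longrightarrow> d dvd lucasU P Q i \<longleftrightarrow> \<rho> dvd i"
    using lucasU_rank_of_apparition[OF assms] by blast
  have "{i \<in> {1..k}. d dvd lucasU P Q (s + i)} = {i \<in> {1..k}. \<rho> dvd s + i}"
    "{i \<in> {1..k}. d dvd lucasU P Q i} = {i \<in> {1..k}. \<rho> dvd i}"
    using rank by auto
  then show ?thesis using card_shifted_multiples_le \<open>\<rho> \<ge> 1\<close> by simp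
next
  case False
  then have "{i \<in> {1..k}. d dvd lucasU P Q (s + i)} = {}" by auto
  then show ?thesis by (simp only: card.empty zero_le)
qed

lemma Lcm_insert_mult_gcd:
  fixes a :: int
  assumes "finite A"
  shows "Lcm (insert a A) * gcd a (Lcm A) = \<bar>a\<bar> * Lcm A"
  using assms prod_gcd_lcm_int[of a "Lcm A"] by (simp add: mult.commute)

lemma power_le_pred_mult_power:
  fixes a b :: real
  assumes "b + 1 \<le> a" and "0 \<le> b" and "m \<ge> 1"
  shows "b ^ m \<le> (a - 1) * a ^ (m - 1)"
proof -
  obtain k where "m = Suc k" using assms(3) by (cases m) auto
  then have "b ^ m = b * b ^ k" by simp
  also have "\<dots> \<le> (a - 1) * a ^ k"
    using assms by (intro mult_mono power_mono) auto
  finally show ?thesis using \<open>m = Suc k\<close> by simp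
qed

lemma power_add_power_le_power_Suc:
  fixes a b :: real
  assumes "b + 1 \<le> a" and "0 \<le> b" and "m \<ge> 1"
  shows "a ^ m + b ^ m \<le> a ^ (m + 1)"
proof -
  define X where "X = a ^ (m - 1)"
  have "a ^ m = a * X" "a ^ (m + 1) = a * (a * X)"
    unfolding X_def using assms(3) by (simp_all flip: power_Suc)
  moreover have "b ^ m \<le> a * X - X"
    using power_le_pred_mult_power[OF assms] unfolding X_def by (simp add: algebra_simps)
  moreover have "0 \<le> (a - 1) * ((a - 1) * X)"
    unfolding X_def using assms by simp
  then have "0 \<le> a * (a * X) - 2 * (a * X) + X"
    by (simp add: algebra_simps)
  ultimately show ?thesis by linarith
qed

lemma mult_power_le_pred_mult_power:
  fixes a b :: real
  assumes "b + 1 \<le> a" and "0 \<le> b" and "m \<ge> 1"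
  shows "a * b ^ m \<le> (a - 1) * a ^ m"
proof -
  have "a * b ^ m \<le> a * ((a - 1) * a ^ (m - 1))"
    using power_le_pred_mult_power[OF assms] assms(1,2) by (intro mult_left_mono) auto
  also have "\<dots> = (a - 1) * a ^ m"
    using assms(3) by (cases m) simp_all
  finally show ?thesis .
qed

lemma power_quadratic_form_le:
  fixes a b :: real
  assumes "b + 1 \<le> a" and "0 \<le> b" and "m \<ge> 1"
  shows "a ^ (2 * m) + a ^ m * b ^ m + b ^ (2 * m) \<le> a ^ (2 * m + 1)"
proof -
  define x y where "x = a ^ m" and "y = b ^ m"
  have "1 \<le> a" "0 \<le> x" "0 \<le> y" using assms by (simp_all add: x_def y_def)
  have ay: "a * y \<le> (a - 1) * x"
    unfolding x_def y_def by (rule mult_power_le_pred_mult_power[OF assms])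
  have "a * x * (a * y) \<le> a * x * ((a - 1) * x)"
    using ay \<open>1 \<le> a\<close> \<open>0 \<le> x\<close> by (intro mult_left_mono) auto
  moreover have "(a * y) * (a * y) \<le> ((a - 1) * x) * ((a - 1) * x)"
    using \<open>1 \<le> a\<close> \<open>0 \<le> x\<close> \<open>0 \<le> y\<close> by (intro mult_mono[OF ay ay]) auto
  moreover have "0 \<le> (a - 1) ^ 3 * (x * x)"
    using \<open>1 \<le> a\<close> by simp
  ultimately have "a * a * (x * x + x * y + y * y) \<le> a * a * (a * (x * x))"
    by (simp add: algebra_simps power3_eq_cube)
  then have "x * x + x * y + y * y \<le> a * (x * x)"
    using \<open>1 \<le> a\<close> by (simp add: mult_le_cancel_left)
  then show ?thesis
    by (simp add: x_def y_def power_mult power2_eq_square mult.commute[of 2])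
qed

lemma power_mult_add_le_power_diff:
  fixes a b :: real
  assumes "b + 1 \<le> a" and "0 \<le> b" and "j \<ge> 1" and "s \<ge> 1"
  shows "a ^ (s - 1) * (a ^ j + b ^ j) \<le> a ^ (j + s) - b ^ (j + s)"
proof -
  define x z w where "x = a ^ (s - 1)" and "z = a ^ j" and "w = b ^ j"
  have "1 \<le> a" "0 \<le> x" "0 \<le> w" using assms by (simp_all add: x_def w_def)
  have "b ^ (j + s) = w * b ^ s" by (simp add: w_def power_add)
  also have "\<dots> \<le> w * ((a - 1) * x)"
    unfolding x_def using power_le_pred_mult_power[OF assms(1,2,4)] \<open>0 \<le> w\<close> by (rule mult_left_mono)
  finally have "b ^ (j + s) \<le> x * (a * w) - x * w" by (simp add: algebra_simps)
  moreover have "x * (a * w) \<le> x * ((a - 1) * z)"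
    unfolding w_def z_def using mult_power_le_pred_mult_power[OF assms(1-3)] \<open>0 \<le> x\<close>
    by (rule mult_left_mono)
  moreover have "a ^ (j + s) = a * (x * z)"
    unfolding x_def z_def using assms(4) by (cases s) (simp_all add: power_add)
  moreover have "x * ((a - 1) * z) = a * (x * z) - x * z"
    by (simp add: algebra_simps)
  moreover have "a ^ (s - 1) * (a ^ j + b ^ j) = x * z + x * w"
    by (simp add: x_def z_def w_def algebra_simps)
  ultimately show ?thesis by linarith
qed

text \<open>\<open>\<bar>\<alpha>\<bar> ^ lcm_step_exponent k\<close> bounds the factor by which \<open>U k\<close> can enlarge \<open>lcm (U 1, \<dots>, U (k-1))\<close>.\<close>

definition lcm_step_exponent :: "nat \<Rightarrow> nat" where
  "lcm_step_exponent k =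
     (if 6 dvd k then k div 3 + 1
      else if 2 dvd k then k div 2 + 1
      else if 3 dvd k then 2 * (k div 3) + 1
      else k + 1)"

definition lcm_exponent :: "nat \<Rightarrow> nat" where
  "lcm_exponent n = (\<Sum>k = 2..n. lcm_step_exponent k)"

lemma lcm_exponent_Suc: "n \<ge> 1 \<Longrightarrow> lcm_exponent (Suc n) = lcm_exponent n + lcm_step_exponent (Suc n)"
  by (simp add: lcm_exponent_def)

lemma lcm_step_exponent_6_mult_add:
  "lcm_step_exponent (6 * q + c) =
     (if c mod 6 = 0 then 2 * q + c div 3 + 1
      else if c mod 2 = 0 then 3 * q + c div 2 + 1
      else if c mod 3 = 0 then 4 * q + 2 * (c div 3) + 1
      else 6 * q + c + 1)"
proof -
  have "(6 * q + c) mod 2 = c mod 2" "(6 * q + c) div 2 = 3 * q + c div 2"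
    using mod_mult_self4[of 2 "3 * q" c] div_mult_self4[of 2 "3 * q" c] by (simp_all add: mult.assoc)
  moreover have "(6 * q + c) mod 3 = c mod 3" "(6 * q + c) div 3 = 2 * q + c div 3"
    using mod_mult_self4[of 3 "2 * q" c] div_mult_self4[of 3 "2 * q" c] by (simp_all add: mult.assoc)
  moreover have "(6 * q + c) mod 6 = c mod 6" by simp
  ultimately show ?thesis unfolding lcm_step_exponent_def dvd_eq_mod_eq_0 by simp
qed

lemma lcm_step_exponent_six_consecutive:
  "3 * (lcm_step_exponent (m + 1) + lcm_step_exponent (m + 2) + lcm_step_exponent (m + 3)
      + lcm_step_exponent (m + 4) + lcm_step_exponent (m + 5) + lcm_step_exponent (m + 6))
   \<le> 12 * m + 78"
proof -
  obtain q r where m: "m = 6 * q + r" and "r < 6"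
    using div_mult_mod_eq[of m 6] by (metis mod_less_divisor zero_less_numeral mult.commute)
  then have "r \<in> {0, 1, 2, 3, 4, 5}" by auto
  then show ?thesis
    unfolding m add.assoc lcm_step_exponent_6_mult_add by (elim insertE emptyE; simp)
qed

lemma lcm_exponent_small:
  "lcm_exponent 2 = 2" "lcm_exponent 3 = 5"
  "lcm_exponent 4 = 8" "lcm_exponent 5 = 14" "lcm_exponent 6 = 17"
proof -
  show "lcm_exponent 2 = 2" by (simp add: lcm_exponent_def lcm_step_exponent_def)
  then show "lcm_exponent 3 = 5"
    using lcm_exponent_Suc[of 2] by (simp add: lcm_step_exponent_def)
  then show "lcm_exponent 4 = 8"
    using lcm_exponent_Suc[of 3] by (simp add: lcm_step_exponent_def)
  then show "lcm_exponent 5 = 14"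
    using lcm_exponent_Suc[of 4] by (simp add: lcm_step_exponent_def)
  then show "lcm_exponent 6 = 17"
    using lcm_exponent_Suc[of 5] by (simp add: lcm_step_exponent_def)
qed

lemma lcm_exponent_add_6:
  assumes "m \<ge> 1"
  shows "lcm_exponent (m + 6) = lcm_exponent m
    + (lcm_step_exponent (m + 1) + lcm_step_exponent (m + 2) + lcm_step_exponent (m + 3)
      + lcm_step_exponent (m + 4) + lcm_step_exponent (m + 5) + lcm_step_exponent (m + 6))"
proof -
  have "lcm_exponent (m + k) = lcm_exponent m + (\<Sum>i = 1..k. lcm_step_exponent (m + i))" for k
    by (induction k) (use assms in \<open>simp_all add: lcm_exponent_Suc\<close>)
  from this [of 6] show ?thesis by (simp add: numeral_eq_Suc add_ac)
qed

lemma lcm_exponent_bound: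
  assumes "n \<ge> 1"
  shows "3 * lcm_exponent n + 8 \<le> n\<^sup>2 + 7 * n"
  using assms
proof (induction n rule: less_induct)
  case (less n)
  show ?case
  proof (cases "n \<le> 6")
    case True
    then consider "n = 1" | "n = 2" | "n = 3" | "n = 4" | "n = 5" | "n = 6"
      using less.prems by linarith
    then show ?thesis by cases (simp add: lcm_exponent_def, simp_all add: lcm_exponent_small)
  next
    case False
    define m where "m = n - 6"
    have "n = m + 6" "m \<ge> 1" using False by (simp_all add: m_def)
    moreover have "3 * lcm_exponent m + 8 \<le> m\<^sup>2 + 7 * m"
      using less.IH \<open>n = m + 6\<close> \<open>m \<ge> 1\<close> by simp
    moreover have "(m + 6)\<^sup>2 + 7 * (m + 6) = m\<^sup>2 + 7 * m + (12 * m + 78)"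
      by (simp add: power2_eq_square algebra_simps)
    moreover obtain S where "lcm_exponent (m + 6) = lcm_exponent m + S" and "3 * S \<le> 12 * m + 78"
      using lcm_exponent_add_6[OF \<open>m \<ge> 1\<close>] lcm_step_exponent_six_consecutive[of m] by blast
    ultimately show ?thesis by simp
  qed
qed

lemma lcm_exponent_le:
  assumes "n \<ge> 1"
  shows "real (lcm_exponent n) \<le> (real n)\<^sup>2 / 3 + 7 * real n / 3 - 8 / 3"
proof -
  have "real (3 * lcm_exponent n + 8) \<le> real (n\<^sup>2 + 7 * n)"
    using lcm_exponent_bound[OF assms] by (simp only: of_nat_le_iff)
  then show ?thesis by simp
qed

locale lucas_roots =
  fixes P Q :: int and \<alpha> \<beta> :: real
  assumes roots_sum: "\<alpha> + \<beta> = of_int P"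
    and roots_prod: "\<alpha> * \<beta> = of_int Q"
    and roots_gap: "\<bar>\<beta>\<bar> + 1 \<le> \<bar>\<alpha>\<bar>"
begin

lemma one_le_abs_alpha: "1 \<le> \<bar>\<alpha>\<bar>"
  using roots_gap by linarith

lemma one_le_abs_alpha_minus_beta: "1 \<le> \<bar>\<alpha> - \<beta>\<bar>"
  using roots_gap by linarith

lemma lucasU_closed_form: "real_of_int (lucasU P Q n) * (\<alpha> - \<beta>) = \<alpha> ^ n - \<beta> ^ n"
proof (induction n rule: induct_nat_012)
  case (ge2 n)
  have "real_of_int (lucasU P Q (Suc (Suc n))) * (\<alpha> - \<beta>)
      = (\<alpha> + \<beta>) * (real_of_int (lucasU P Q (Suc n)) * (\<alpha> - \<beta>))
        - \<alpha> * \<beta> * (real_of_int (lucasU P Q n) * (\<alpha> - \<beta>))"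
    by (simp add: roots_sum roots_prod algebra_simps)
  also have "\<dots> = \<alpha> ^ Suc (Suc n) - \<beta> ^ Suc (Suc n)"
    unfolding ge2.IH by (simp add: algebra_simps)
  finally show ?case .
qed simp_all

lemma abs_lucasU_mult: "\<bar>real_of_int (lucasU P Q n)\<bar> * \<bar>\<alpha> - \<beta>\<bar> = \<bar>\<alpha> ^ n - \<beta> ^ n\<bar>"
  by (metis abs_mult lucasU_closed_form)

lemma lucasU_nonzero:
  assumes "n \<ge> 1"
  shows "lucasU P Q n \<noteq> 0"
proof
  assume "lucasU P Q n = 0"
  then have "\<alpha> ^ n = \<beta> ^ n" using lucasU_closed_form[of n] by simp
  moreover have "\<bar>\<beta>\<bar> ^ n < \<bar>\<alpha>\<bar> ^ n"
    using roots_gap assms by (intro power_strict_mono) auto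
  ultimately show False by (metis power_abs less_irrefl)
qed

lemma abs_lucasU_le:
  assumes "n \<ge> 1"
  shows "\<bar>real_of_int (lucasU P Q n)\<bar> \<le> \<bar>\<alpha>\<bar> ^ (n + 1)"
proof -
  have "\<bar>real_of_int (lucasU P Q n)\<bar> \<le> \<bar>real_of_int (lucasU P Q n)\<bar> * \<bar>\<alpha> - \<beta>\<bar>"
    using one_le_abs_alpha_minus_beta by (simp add: mult_le_cancel_left1)
  also have "\<dots> \<le> \<bar>\<alpha>\<bar> ^ n + \<bar>\<beta>\<bar> ^ n"
    unfolding abs_lucasU_mult using abs_triangle_ineq4[of "\<alpha> ^ n" "\<beta> ^ n"] by (simp add: power_abs)
  also have "\<dots> \<le> \<bar>\<alpha>\<bar> ^ (n + 1)"
    using power_add_power_le_power_Suc[OF roots_gap _ assms] by simp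
  finally show ?thesis .
qed

lemma abs_lucasU_add_ge:
  assumes "j \<ge> 1" and "s \<ge> 1"
  shows "\<bar>\<alpha>\<bar> ^ (s - 1) * \<bar>real_of_int (lucasU P Q j)\<bar> \<le> \<bar>real_of_int (lucasU P Q (s + j))\<bar>"
proof -
  have "\<bar>\<alpha>\<bar> ^ (s - 1) * \<bar>real_of_int (lucasU P Q j)\<bar> * \<bar>\<alpha> - \<beta>\<bar> \<le> \<bar>\<alpha>\<bar> ^ (s - 1) * (\<bar>\<alpha>\<bar> ^ j + \<bar>\<beta>\<bar> ^ j)"
    unfolding mult.assoc abs_lucasU_mult using abs_triangle_ineq4[of "\<alpha> ^ j" "\<beta> ^ j"]
    by (intro mult_left_mono) (simp_all add: power_abs)
  also have "\<dots> \<le> \<bar>\<alpha>\<bar> ^ (j + s) - \<bar>\<beta>\<bar> ^ (j + s)"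
    using power_mult_add_le_power_diff[OF roots_gap _ assms] by simp
  also have "\<dots> \<le> \<bar>real_of_int (lucasU P Q (s + j))\<bar> * \<bar>\<alpha> - \<beta>\<bar>"
    unfolding abs_lucasU_mult using abs_triangle_ineq2[of "\<alpha> ^ (s + j)" "\<beta> ^ (s + j)"]
    by (simp add: power_abs add.commute)
  finally show ?thesis
    using one_le_abs_alpha_minus_beta by (simp add: mult_le_cancel_right)
qed

lemma lucasU_eq_divide: "real_of_int (lucasU P Q n) = (\<alpha> ^ n - \<beta> ^ n) / (\<alpha> - \<beta>)"
  using lucasU_closed_form[of n] one_le_abs_alpha_minus_beta by (simp add: field_simps)

lemma lucasU_double: "real_of_int (lucasU P Q (2 * m)) = real_of_int (lucasU P Q m) * (\<alpha> ^ m + \<beta> ^ m)"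
proof -
  have "\<alpha> ^ (2 * m) - \<beta> ^ (2 * m) = (\<alpha> ^ m - \<beta> ^ m) * (\<alpha> ^ m + \<beta> ^ m)"
    by (simp add: power_mult mult.commute[of 2] power2_eq_square algebra_simps)
  then show ?thesis by (simp add: lucasU_eq_divide)
qed

lemma lucasU_triple:
  "real_of_int (lucasU P Q (3 * m))
     = real_of_int (lucasU P Q m) * (\<alpha> ^ (2 * m) + \<alpha> ^ m * \<beta> ^ m + \<beta> ^ (2 * m))"
proof -
  have "\<alpha> ^ (3 * m) - \<beta> ^ (3 * m) = (\<alpha> ^ m - \<beta> ^ m) * (\<alpha> ^ (2 * m) + \<alpha> ^ m * \<beta> ^ m + \<beta> ^ (2 * m))"
    by (simp add: power_mult mult.commute[of _ m] power2_eq_square power3_eq_cube algebra_simps)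
  then show ?thesis by (simp add: lucasU_eq_divide)
qed

lemma lucasU_sextuple:
  "real_of_int (lucasU P Q (6 * m)) * real_of_int (lucasU P Q m)
     = real_of_int (lucasU P Q (2 * m)) * real_of_int (lucasU P Q (3 * m))
       * (\<alpha> ^ (2 * m) - \<alpha> ^ m * \<beta> ^ m + \<beta> ^ (2 * m))"
proof -
  define x y where "x = \<alpha> ^ m" and "y = \<beta> ^ m"
  have powers: "\<alpha> ^ (k * m) = x ^ k" "\<beta> ^ (k * m) = y ^ k" for k
    by (simp_all add: x_def y_def power_mult mult.commute[of k])
  have "(x ^ 6 - y ^ 6) * (x - y) = (x ^ 2 - y ^ 2) * (x ^ 3 - y ^ 3) * (x ^ 2 - x * y + y ^ 2)"
    by algebra
  then show ?thesis
    unfolding lucasU_eq_divide powers x_def [symmetric] y_def [symmetric] by (simp add: field_simps)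
qed

lemma abs_power_add_power_le:
  assumes "m \<ge> 1"
  shows "\<bar>\<alpha> ^ m + \<beta> ^ m\<bar> \<le> \<bar>\<alpha>\<bar> ^ (m + 1)"
  using abs_triangle_ineq[of "\<alpha> ^ m" "\<beta> ^ m"] power_add_power_le_power_Suc[OF roots_gap _ assms]
  by (simp add: power_abs)

lemma abs_power_quadratic_form_le:
  assumes "m \<ge> 1" and "\<bar>c\<bar> = 1"
  shows "\<bar>\<alpha> ^ (2 * m) + c * (\<alpha> ^ m * \<beta> ^ m) + \<beta> ^ (2 * m)\<bar> \<le> \<bar>\<alpha>\<bar> ^ (2 * m + 1)"
proof -
  have "\<bar>\<alpha> ^ (2 * m) + c * (\<alpha> ^ m * \<beta> ^ m) + \<beta> ^ (2 * m)\<bar>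
      \<le> \<bar>\<alpha>\<bar> ^ (2 * m) + \<bar>\<alpha>\<bar> ^ m * \<bar>\<beta>\<bar> ^ m + \<bar>\<beta>\<bar> ^ (2 * m)"
    using abs_triangle_ineq[of "\<alpha> ^ (2 * m) + c * (\<alpha> ^ m * \<beta> ^ m)" "\<beta> ^ (2 * m)"]
      abs_triangle_ineq[of "\<alpha> ^ (2 * m)" "c * (\<alpha> ^ m * \<beta> ^ m)"] assms(2)
    by (simp add: power_abs abs_mult)
  also have "\<dots> \<le> \<bar>\<alpha>\<bar> ^ (2 * m + 1)"
    using power_quadratic_form_le[OF roots_gap _ assms(1)] by simp
  finally show ?thesis .
qed

lemma abs_lucasU_2_3_le:
  assumes "coprime P Q" and "m \<ge> 1"
  shows "\<bar>lucasU P Q (2 * m) * lucasU P Q (3 * m)\<bar>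
    \<le> \<bar>lucasU P Q m\<bar> * gcd (lucasU P Q (6 * m)) (Lcm (lucasU P Q ` {1..6 * m - 1}))"
proof -
  define g where "g = gcd (lucasU P Q (6 * m)) (Lcm (lucasU P Q ` {1..6 * m - 1}))"
  have "g > 0" using lucasU_nonzero[of "6 * m"] assms(2) by (simp add: g_def)
  have "lcm (lucasU P Q (2 * m)) (lucasU P Q (3 * m)) dvd g"
    unfolding g_def using assms(2) by (intro lcm_least lucasU_dvd_gcd_Lcm) auto
  then have "lcm (lucasU P Q (2 * m)) (lucasU P Q (3 * m)) \<le> g"
    using \<open>g > 0\<close> by (simp add: zdvd_imp_le)
  moreover have "gcd (lucasU P Q (2 * m)) (lucasU P Q (3 * m)) dvd lucasU P Q m"
  proof -
    have "gcd (2 * m) (3 * m) = m"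
      using gcd_mult_distrib_nat[of m 2 3] by (simp add: mult.commute)
    then show ?thesis using dvd_lucasU_gcd[OF assms(1), of _ "2 * m" "3 * m"] by simp
  qed
  then have "gcd (lucasU P Q (2 * m)) (lucasU P Q (3 * m)) \<le> \<bar>lucasU P Q m\<bar>"
    using dvd_imp_le_int[OF lucasU_nonzero[OF assms(2)]] by fastforce
  ultimately show ?thesis
    unfolding g_def [symmetric] abs_mult prod_gcd_lcm_int by (intro mult_mono) auto
qed

lemma abs_lucasU_le_gcd_Lcm:
  assumes "1 \<le> d" and "d < k" and "d dvd k"
  shows "\<bar>real_of_int (lucasU P Q d)\<bar> \<le> real_of_int (gcd (lucasU P Q k) (Lcm (lucasU P Q ` {1..k-1})))"
proof -
  define g where "g = gcd (lucasU P Q k) (Lcm (lucasU P Q ` {1..k-1}))"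
  have "g > 0" using lucasU_nonzero[of k] assms by (simp add: g_def)
  moreover have "lucasU P Q d dvd g" unfolding g_def using assms by (rule lucasU_dvd_gcd_Lcm)
  ultimately have "\<bar>lucasU P Q d\<bar> \<le> g" using dvd_imp_le_int[of g] by fastforce
  then show ?thesis by (simp add: g_def flip: of_int_abs)
qed

lemma abs_lucasU_6_mult_le:
  assumes "coprime P Q" and "m \<ge> 1"
  shows "\<bar>real_of_int (lucasU P Q (6 * m))\<bar>
    \<le> real_of_int (gcd (lucasU P Q (6 * m)) (Lcm (lucasU P Q ` {1..6 * m - 1}))) * \<bar>\<alpha>\<bar> ^ (2 * m + 1)"
proof -
  define g where "g = gcd (lucasU P Q (6 * m)) (Lcm (lucasU P Q ` {1..6 * m - 1}))"
  have "\<bar>real_of_int (lucasU P Q (6 * m))\<bar> * \<bar>real_of_int (lucasU P Q m)\<bar>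
      = \<bar>real_of_int (lucasU P Q (2 * m) * lucasU P Q (3 * m))\<bar>
        * \<bar>\<alpha> ^ (2 * m) + (- 1) * (\<alpha> ^ m * \<beta> ^ m) + \<beta> ^ (2 * m)\<bar>"
    using lucasU_sextuple[of m] by (simp add: abs_mult [symmetric])
  also have "\<dots> \<le> (\<bar>real_of_int (lucasU P Q m)\<bar> * real_of_int g) * \<bar>\<alpha>\<bar> ^ (2 * m + 1)"
  proof (rule mult_mono)
    show "\<bar>real_of_int (lucasU P Q (2 * m) * lucasU P Q (3 * m))\<bar>
        \<le> \<bar>real_of_int (lucasU P Q m)\<bar> * real_of_int g"
      using abs_lucasU_2_3_le[OF assms] unfolding g_def by (metis of_int_abs of_int_le_iff of_int_mult)
  qed (use abs_power_quadratic_form_le[of m "- 1"] assms(2) in \<open>auto simp: g_def\<close>)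
  finally show ?thesis
    using lucasU_nonzero[OF assms(2)] by (simp add: g_def mult_ac mult_le_cancel_left_pos)
qed

lemma abs_lucasU_le_gcd_mult_power:
  assumes "coprime P Q" and "k \<ge> 2"
  shows "\<bar>real_of_int (lucasU P Q k)\<bar>
    \<le> real_of_int (gcd (lucasU P Q k) (Lcm (lucasU P Q ` {1..k-1}))) * \<bar>\<alpha>\<bar> ^ lcm_step_exponent k"
proof -
  define g where "g = gcd (lucasU P Q k) (Lcm (lucasU P Q ` {1..k-1}))"
  have "g > 0" using lucasU_nonzero[of k] assms(2) by (simp add: g_def)
  consider (six) m where "k = 6 * m"
    | (two) m where "k = 2 * m" "\<not> 6 dvd k"
    | (three) m where "k = 3 * m" "\<not> 2 dvd k"
    | (other) "\<not> 6 dvd k" "\<not> 2 dvd k" "\<not> 3 dvd k"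
    by (metis dvdE)
  then show ?thesis
  proof cases
    case six
    then have "m \<ge> 1" using assms(2) by (cases m) auto
    moreover have "lcm_step_exponent k = 2 * m + 1"
      using six by (simp add: lcm_step_exponent_def)
    ultimately show ?thesis using abs_lucasU_6_mult_le[OF assms(1)] six by simp
  next
    case two
    then have "m \<ge> 1" using assms(2) by (cases m) auto
    have "\<bar>real_of_int (lucasU P Q k)\<bar> = \<bar>real_of_int (lucasU P Q m)\<bar> * \<bar>\<alpha> ^ m + \<beta> ^ m\<bar>"
      using lucasU_double[of m] two by (simp add: abs_mult)
    also have "\<dots> \<le> real_of_int g * \<bar>\<alpha>\<bar> ^ (m + 1)"
      using abs_lucasU_le_gcd_Lcm[of m k] abs_power_add_power_le[of m] two \<open>m \<ge> 1\<close>
      unfolding g_def by (intro mult_mono) auto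
    moreover have "lcm_step_exponent k = m + 1"
      using two by (simp add: lcm_step_exponent_def)
    ultimately show ?thesis by (simp add: g_def)
  next
    case three
    then have "m \<ge> 1" using assms(2) by (cases m) auto
    have "\<bar>real_of_int (lucasU P Q k)\<bar>
        = \<bar>real_of_int (lucasU P Q m)\<bar> * \<bar>\<alpha> ^ (2 * m) + 1 * (\<alpha> ^ m * \<beta> ^ m) + \<beta> ^ (2 * m)\<bar>"
      using lucasU_triple[of m] three by (simp add: abs_mult)
    also have "\<dots> \<le> real_of_int g * \<bar>\<alpha>\<bar> ^ (2 * m + 1)"
      using abs_lucasU_le_gcd_Lcm[of m k] abs_power_quadratic_form_le[of m 1] three \<open>m \<ge> 1\<close>
      unfolding g_def by (intro mult_mono) auto
    moreover have "lcm_step_exponent k = 2 * m + 1"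
      using three by (simp add: lcm_step_exponent_def)
    ultimately show ?thesis by (simp add: g_def)
  next
    case other
    have "\<bar>real_of_int (lucasU P Q k)\<bar> \<le> 1 * \<bar>\<alpha>\<bar> ^ (k + 1)"
      using abs_lucasU_le assms(2) by simp
    also have "\<dots> \<le> real_of_int g * \<bar>\<alpha>\<bar> ^ (k + 1)"
      using \<open>g > 0\<close> by (intro mult_right_mono) auto
    moreover have "lcm_step_exponent k = k + 1"
      using other by (simp add: lcm_step_exponent_def)
    ultimately show ?thesis by (simp add: g_def)
  qed
qed

lemma Lcm_lucasU_le_step:
  assumes "coprime P Q" and "k \<ge> 2"
  shows "real_of_int (Lcm (lucasU P Q ` {1..k}))
    \<le> real_of_int (Lcm (lucasU P Q ` {1..k-1})) * \<bar>\<alpha>\<bar> ^ lcm_step_exponent k"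
proof -
  define L' where "L' = Lcm (lucasU P Q ` {1..k-1})"
  define g where "g = gcd (lucasU P Q k) L'"
  have "g > 0" using lucasU_nonzero[of k] assms(2) by (simp add: g_def)
  have "{1..k} = insert k {1..k-1}" using assms(2) by auto
  then have "real_of_int (Lcm (lucasU P Q ` {1..k})) * real_of_int g
      = \<bar>real_of_int (lucasU P Q k)\<bar> * real_of_int L'"
    using Lcm_insert_mult_gcd[of "lucasU P Q ` {1..k-1}" "lucasU P Q k"]
    unfolding L'_def g_def by (metis finite_atLeastAtMost finite_imageI image_insert of_int_abs of_int_mult)
  also have "\<dots> \<le> real_of_int g * \<bar>\<alpha>\<bar> ^ lcm_step_exponent k * real_of_int L'"
    using abs_lucasU_le_gcd_mult_power[OF assms] unfolding g_def L'_def
    by (intro mult_right_mono) auto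
  finally show ?thesis
    using \<open>g > 0\<close> by (simp add: L'_def mult_ac mult_le_cancel_left_pos)
qed

lemma Lcm_lucasU_le_power:
  assumes "coprime P Q" and "n \<ge> 1"
  shows "real_of_int (Lcm (lucasU P Q ` {1..n})) \<le> \<bar>\<alpha>\<bar> ^ lcm_exponent n"
  using assms(2)
proof (induction n rule: dec_induct)
  case base
  then show ?case by (simp add: lcm_exponent_def)
next
  case (step n)
  have "real_of_int (Lcm (lucasU P Q ` {1..Suc n}))
      \<le> real_of_int (Lcm (lucasU P Q ` {1..n})) * \<bar>\<alpha>\<bar> ^ lcm_step_exponent (Suc n)"
    using Lcm_lucasU_le_step[OF assms(1), of "Suc n"] step.hyps by simp
  also have "\<dots> \<le> \<bar>\<alpha>\<bar> ^ lcm_exponent n * \<bar>\<alpha>\<bar> ^ lcm_step_exponent (Suc n)"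
    using step.IH by (intro mult_right_mono) auto
  also have "\<dots> = \<bar>\<alpha>\<bar> ^ lcm_exponent (Suc n)"
    using step.hyps by (simp add: lcm_exponent_Suc power_add)
  finally show ?case .
qed

lemma Lcm_lucasU_ge_power:
  assumes "coprime P Q" and "n \<ge> 1"
  shows "\<bar>\<alpha>\<bar> ^ ((n - n div 2 - 1) * (n div 2)) \<le> real_of_int (Lcm (lucasU P Q ` {1..n}))"
proof -
  define k s where "k = n div 2" and "s = n - n div 2"
  have "s \<ge> 1" "s + k = n" using assms(2) by (simp_all add: k_def s_def)
  define A B L where "A = (\<Prod>i\<in>{1..k}. lucasU P Q (s + i))" and "B = (\<Prod>i\<in>{1..k}. lucasU P Q i)"
    and "L = Lcm (lucasU P Q ` {1..n})"
  have "B \<noteq> 0" using lucasU_nonzero by (simp add: B_def)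
  have "A dvd L * B"
    unfolding A_def B_def L_def \<open>s + k = n\<close> [symmetric]
    using lucasU_nonzero card_dvd_lucasU_shift_le[OF assms(1)]
    by (intro prod_shift_dvd_Lcm_mult_prod) auto
  moreover have "L \<noteq> 0"
    using lucasU_nonzero by (auto simp: L_def Lcm_0_iff)
  ultimately have "\<bar>A\<bar> \<le> L * \<bar>B\<bar>"
    using \<open>B \<noteq> 0\<close> dvd_imp_le_int[of "L * B" A] by (simp add: L_def abs_mult)
  have "\<bar>\<alpha>\<bar> ^ ((s - 1) * k) * \<bar>real_of_int B\<bar> = (\<Prod>i\<in>{1..k}. \<bar>\<alpha>\<bar> ^ (s - 1) * \<bar>real_of_int (lucasU P Q i)\<bar>)"
    by (simp add: B_def prod.distrib abs_prod power_mult)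
  also have "\<dots> \<le> (\<Prod>i\<in>{1..k}. \<bar>real_of_int (lucasU P Q (s + i))\<bar>)"
    using abs_lucasU_add_ge \<open>s \<ge> 1\<close> by (intro prod_mono) auto
  also have "\<dots> = \<bar>real_of_int A\<bar>"
    by (simp add: A_def abs_prod)
  also have "\<dots> \<le> real_of_int L * \<bar>real_of_int B\<bar>"
    using \<open>\<bar>A\<bar> \<le> L * \<bar>B\<bar>\<close> by (metis of_int_abs of_int_le_iff of_int_mult)
  finally show ?thesis
    using \<open>B \<noteq> 0\<close> by (simp add: L_def k_def s_def mult_le_cancel_right_pos)
qed

end

lemma dominant_root_gap:
  fixes P Q :: int and \<alpha> :: real
  assumes "P \<noteq> 0" and "P\<^sup>2 - 4 * Q > 0"
    and root: "\<alpha>\<^sup>2 - of_int P * \<alpha> + of_int Q = 0"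
    and dominant: "\<And>x::real. x\<^sup>2 - of_int P * x + of_int Q = 0 \<Longrightarrow> \<bar>x\<bar> \<le> \<bar>\<alpha>\<bar>"
  shows "\<bar>of_int P - \<alpha>\<bar> + 1 \<le> \<bar>\<alpha>\<bar>"
proof -
  define \<beta> where "\<beta> = of_int P - \<alpha>"
  have "\<bar>\<beta>\<bar> \<le> \<bar>\<alpha>\<bar>"
    using root by (intro dominant) (simp add: \<beta>_def power2_eq_square algebra_simps)
  have "(\<alpha> - \<beta>)\<^sup>2 = of_int (P\<^sup>2 - 4 * Q)"
    using root by (simp add: \<beta>_def power2_eq_square algebra_simps)
  moreover have "(1::real) \<le> of_int (P\<^sup>2 - 4 * Q)" using assms(2) by linarith
  ultimately have "1 \<le> \<bar>\<alpha> - \<beta>\<bar>"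
    by (metis abs_le_square_iff abs_one power_one)
  moreover have "1 \<le> \<bar>\<alpha> + \<beta>\<bar>"
    using assms(1) by (simp add: \<beta>_def)
  \<comment> \<open>\<open>|\<alpha>| - |\<beta>|\<close> equals \<open>|\<alpha> - \<beta>|\<close> or \<open>|\<alpha> + \<beta>|\<close>, according to the relative signs of the roots.\<close>
  ultimately show ?thesis
    using \<open>\<bar>\<beta>\<bar> \<le> \<bar>\<alpha>\<bar>\<close> unfolding \<beta>_def [symmetric] by (cases "0 \<le> \<alpha>"; cases "0 \<le> \<beta>") auto
qed

lemma quarter_square_le_lower_exponent:
  "(real n)\<^sup>2 / 4 - real n / 2 - 1 \<le> real ((n - n div 2 - 1) * (n div 2))"
proof (cases "even n")
  case True
  then obtain k where "n = 2 * k" by blast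
  then show ?thesis by (cases k) (simp_all add: power2_eq_square algebra_simps)
next
  case False
  then obtain k where "n = 2 * k + 1" using oddE by blast
  then show ?thesis by (simp add: power2_eq_square field_simps)
qed

theorem theorem2:
  fixes P Q :: int and \<alpha> :: real and n :: nat
  assumes "P \<noteq> 0" and "Q \<noteq> 0" and "coprime P Q"
    and "P^2 - 4*Q > 0"
    and "\<alpha>^2 - of_int P * \<alpha> + of_int Q = 0"
    and "\<And>x::real. x^2 - of_int P * x + of_int Q = 0 \<Longrightarrow> \<bar>x\<bar> \<le> \<bar>\<alpha>\<bar>"
    and "n \<ge> 1"
  shows "\<bar>\<alpha>\<bar> powr ((real n)^2/4 - real n/2 - 1) \<le> real_of_int (Lcm (lucasU P Q ` {1..n}))
       \<and> real_of_int (Lcm (lucasU P Q ` {1..n})) \<le> \<bar>\<alpha>\<bar> powr ((real n)^2/3 + 7*real n/3 - 8/3)"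
proof -
  interpret lucas_roots P Q \<alpha> "of_int P - \<alpha>"
  proof
    show "\<alpha> * (of_int P - \<alpha>) = of_int Q"
      using assms(5) by (simp add: power2_eq_square algebra_simps)
  qed (use dominant_root_gap[OF assms(1,4-6)] in simp_all)
  have "1 \<le> \<bar>\<alpha>\<bar>" by (rule one_le_abs_alpha)
  have "\<bar>\<alpha>\<bar> powr ((real n)^2/4 - real n/2 - 1) \<le> \<bar>\<alpha>\<bar> powr real ((n - n div 2 - 1) * (n div 2))"
    by (rule powr_mono[OF quarter_square_le_lower_exponent \<open>1 \<le> \<bar>\<alpha>\<bar>\<close>])
  also have "\<dots> = \<bar>\<alpha>\<bar> ^ ((n - n div 2 - 1) * (n div 2))"
    using \<open>1 \<le> \<bar>\<alpha>\<bar>\<close> by (intro powr_realpow) linarith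
  moreover have "\<bar>\<alpha>\<bar> powr real (lcm_exponent n) \<le> \<bar>\<alpha>\<bar> powr ((real n)^2/3 + 7*real n/3 - 8/3)"
    using lcm_exponent_le[OF assms(7)] \<open>1 \<le> \<bar>\<alpha>\<bar>\<close> by (rule powr_mono)
  moreover have "\<bar>\<alpha>\<bar> powr real (lcm_exponent n) = \<bar>\<alpha>\<bar> ^ lcm_exponent n"
    using \<open>1 \<le> \<bar>\<alpha>\<bar>\<close> by (intro powr_realpow) linarith
  ultimately show ?thesis
    using Lcm_lucasU_ge_power[OF assms(3,7)] Lcm_lucasU_le_power[OF assms(3,7)] by linarith
qed

end
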